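(* Let $\mathcal{C}\subseteq\mathbb{F}_q^n$ be an MDS code with $|\mathcal{C}|=q^k$, $k\ge1$, and minimum distance $d=n-k+1$, and let $u,v\in\mathcal{C}$ with $u\ne v$. Then there exists $u'\in\mathcal{C}$ such that $d(u,u')=d$ and $d(u',v)\le d(u,v)-1$.
   Context: $d(\cdot,\cdot)$ is Hamming distance. An $(n,M,d)_q$ code is MDS if $M=q^{n-d+1}$ (it meets the Singleton bound). *)

theory Defs
  imports Main "HOL-Library.Cardinality"
begin

definition hamming :: "'a list \<Rightarrow> 'a list \<Rightarrow> nat" where
  "hamming u v = card {i. i < length u \<and> u ! i \<noteq> v ! i}"

definition min_dist :: "'a list set \<Rightarrow> nat" where
  "min_dist C = Min {hamming u v | u v. u \<in> C \<and> v \<in> C \<and> u \<noteq> v}"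

end

theory Submission
  imports Defs "HOL-Library.FuncSet"
begin

text \<open>Any k coordinates of an MDS code with q^k codewords form an information set:
two codewords agreeing on k coordinates are at distance at most n - k < d, so the
projection onto those coordinates is injective, and by counting it is onto.
Given u \<noteq> v, fix a coordinate j where they differ and k - 1 further coordinates
covering all places where u and v agree. The codeword u' that copies v at j and u on
the other k - 1 coordinates differs from u in at most n - k + 1 = d places, hence in
exactly d, and it differs from v only inside the disagreement set of u and v minus j.\<close>

lemma hamming_le_of_agree_on:
  assumes "length x = n" "P \<subseteq> {..<n}" "\<forall>i\<in>P. x ! i = y ! i"
  shows "hamming x y \<le> n - card P"
proof -
  have "hamming x y \<le> card ({..<n} - P)"
    unfolding hamming_def using assms by (intro card_mono) auto
  also have "\<dots> = n - card P"
    using assms(2) by (simp add: card_Diff_subset finite_subset)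
  finally show ?thesis .
qed

lemma hamming_less_if_agree:
  assumes "length u = n" "length w = n" "j < n" "u ! j \<noteq> v ! j" "w ! j = v ! j"
    and "\<forall>i<n. u ! i = v ! i \<longrightarrow> w ! i = v ! i"
  shows "hamming w v < hamming u v"
  unfolding hamming_def using assms by (intro psubset_card_mono) auto

lemma min_dist_le_hamming:
  assumes "finite C" "x \<in> C" "y \<in> C" "x \<noteq> y"
  shows "min_dist C \<le> hamming x y"
proof -
  have "{hamming u v | u v. u \<in> C \<and> v \<in> C \<and> u \<noteq> v}
          \<subseteq> (\<lambda>(u, v). hamming u v) ` (C \<times> C)"
    by auto
  then have "finite {hamming u v | u v. u \<in> C \<and> v \<in> C \<and> u \<noteq> v}"
    using assms(1) by (meson finite_SigmaI finite_imageI finite_subset)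
  then show ?thesis
    unfolding min_dist_def using assms by (intro Min_le) auto
qed

lemma code_dimension_le_length:
  fixes C :: "'a::finite list set"
  assumes "C \<subseteq> {x. length x = n}" "card C = CARD('a) ^ k" "1 < CARD('a)"
  shows "k \<le> n"
proof -
  have "card C \<le> card {xs :: 'a list. set xs \<subseteq> UNIV \<and> length xs = n}"
    using assms(1) by (intro card_mono[OF finite_lists_length_eq[OF finite_class.finite_UNIV]]) auto
  also have "\<dots> = CARD('a) ^ n"
    by (rule card_lists_length_eq) simp
  finally have "CARD('a) ^ k \<le> CARD('a) ^ n"
    by (simp only: assms(2))
  with assms(3) show ?thesis
    by (rule power_le_imp_le_exp)
qed

lemma exists_subset_covering_complement:
  assumes "S \<subseteq> {..<n}" "j \<in> S" "n - card S \<le> m" "m < n"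
  obtains T where "{..<n} - S \<subseteq> T" "T \<subseteq> {..<n} - {j}" "card T = m"
proof -
  have "finite S"
    using assms(1) finite_subset by blast
  then have "card ({..<n} - S) \<le> m"
    using assms(1,3) by (simp add: card_Diff_subset)
  moreover have "m \<le> card ({..<n} - {j})"
    using assms by auto
  moreover have "{..<n} - S \<subseteq> {..<n} - {j}"
    using assms(2) by blast
  ultimately show ?thesis
    using that exists_subset_between[of "{..<n} - S" m "{..<n} - {j}"] by blast
qed

lemma inj_on_restrict_nth:
  assumes "C \<subseteq> {x. length x = n}" "finite C" "n - card P < min_dist C" "P \<subseteq> {..<n}"
  shows "inj_on (\<lambda>x. restrict ((!) x) P) C"
proof
  fix x y assume xy: "x \<in> C" "y \<in> C" "restrict ((!) x) P = restrict ((!) y) P"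
  then have "\<forall>i\<in>P. x ! i = y ! i"
    by (metis restrict_apply')
  then have "hamming x y \<le> n - card P"
    using xy assms by (intro hamming_le_of_agree_on) auto
  then show "x = y"
    using xy assms min_dist_le_hamming[of C x y] by fastforce
qed

lemma exists_codeword_interpolating:
  fixes C :: "'a::finite list set"
  assumes "C \<subseteq> {x. length x = n}" "card C = CARD('a) ^ card P"
    and "n - card P < min_dist C" "P \<subseteq> {..<n}"
  shows "\<exists>x\<in>C. \<forall>i\<in>P. x ! i = f i"
proof -
  let ?proj = "\<lambda>x. restrict ((!) x) P"
  have "finite C"
    using assms(2) by (intro card_ge_0_finite) simp
  have "finite P"
    using assms(4) finite_subset by blast
  have "card (?proj ` C) = card (P \<rightarrow>\<^sub>E (UNIV :: 'a set))"
    using card_image[OF inj_on_restrict_nth[OF assms(1) \<open>finite C\<close> assms(3,4)]]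
    by (simp add: assms(2) card_PiE \<open>finite P\<close>)
  then have "?proj ` C = P \<rightarrow>\<^sub>E UNIV"
    by (intro card_subset_eq finite_PiE \<open>finite P\<close>) (auto simp: PiE_iff)
  moreover have "restrict f P \<in> P \<rightarrow>\<^sub>E UNIV"
    by (simp add: PiE_iff)
  ultimately have "restrict f P \<in> ?proj ` C"
    by simp
  then obtain x where "x \<in> C" "restrict f P = ?proj x" ..
  then have "\<forall>i\<in>P. x ! i = f i"
    by (metis restrict_apply')
  with \<open>x \<in> C\<close> show ?thesis ..
qed

theorem lemma6:
  fixes C :: "'a::{finite,field} list set" and n k d :: nat and u v :: "'a list"
  assumes "C \<subseteq> {x. length x = n}"
    and "card C = CARD('a) ^ k"
    and "k \<ge> 1"
    and "d = min_dist C"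
    and "d = n - k + 1"
    and "u \<in> C" and "v \<in> C" and "u \<noteq> v"
  shows "\<exists>u'\<in>C. hamming u u' = d \<and> hamming u' v \<le> hamming u v - 1"
proof -
  have "card {0 :: 'a, 1} \<le> CARD('a)"
    by (intro card_mono) auto
  then have "k \<le> n"
    using code_dimension_le_length[OF assms(1,2)] by simp
  have "finite C"
    using assms(2) by (intro card_ge_0_finite) simp
  have len: "length u = n" "length v = n"
    using assms(1,6,7) by auto
  define S where "S = {i. i < n \<and> u ! i \<noteq> v ! i}"
  have "d \<le> card S"
    using min_dist_le_hamming[OF \<open>finite C\<close> assms(6-8)] len
    by (simp add: assms(4) S_def hamming_def)
  then obtain j where "j \<in> S"
    using assms(5) by fastforce
  have "S \<subseteq> {..<n}" "n - card S \<le> k - 1" "k - 1 < n"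
    using \<open>d \<le> card S\<close> \<open>k \<le> n\<close> assms(3,5) by (auto simp: S_def)
  then obtain T where T: "{..<n} - S \<subseteq> T" "T \<subseteq> {..<n} - {j}" "card T = k - 1"
    using \<open>j \<in> S\<close> exists_subset_covering_complement by metis
  have "j \<notin> T" "finite T"
    using T(2) finite_subset by auto
  then have P: "card (insert j T) = k" "insert j T \<subseteq> {..<n}"
    using T \<open>j \<in> S\<close> assms(3) by (auto simp: S_def)
  have "\<exists>u'\<in>C. \<forall>i\<in>insert j T. u' ! i = (if i = j then v ! j else u ! i)"
    by (rule exists_codeword_interpolating[OF assms(1)]) (use P assms(2,4,5) in simp_all)
  then obtain u' where "u' \<in> C"
    and u': "\<forall>i\<in>insert j T. u' ! i = (if i = j then v ! j else u ! i)"
    by blast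
  have "u \<noteq> u'"
    using u' \<open>j \<in> S\<close> by (auto simp: S_def)
  have "hamming u u' \<le> n - card T"
    using u' T(2) len by (intro hamming_le_of_agree_on) auto
  then have "hamming u u' = d"
    using min_dist_le_hamming[OF \<open>finite C\<close> assms(6) \<open>u' \<in> C\<close> \<open>u \<noteq> u'\<close>] T(3) assms(4,5) \<open>k \<le> n\<close>
    by linarith
  moreover have "hamming u' v < hamming u v"
    using u' T \<open>j \<in> S\<close> len assms(1) \<open>u' \<in> C\<close>
    by (intro hamming_less_if_agree[where n = n]) (auto simp: S_def)
  ultimately show ?thesis
    using \<open>u' \<in> C\<close> by auto
qed

end
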